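(* Let $(\mathcal{S},\mathcal{A},\tau,\mu_0,\gamma)$ be fixed, and let $\pi$ be any fixed policy. For reward functions $R, R' : \mathcal{S}\times\mathcal{A}\times\mathcal{S}\to\mathbb{R}$, let $Q^\pi_R$ and $Q^\pi_{R'}$ be the $Q$-functions of $\pi$ in the MDPs $(\mathcal{S},\mathcal{A},\tau,\mu_0,R,\gamma)$ and $(\mathcal{S},\mathcal{A},\tau,\mu_0,R',\gamma)$. Then $Q^\pi_R = Q^\pi_{R'}$ if and only if $R'$ is produced from $R$ by $S'$-redistribution. Likewise, the optimal $Q$-functions satisfy $Q^\star_R = Q^\star_{R'}$ if and only if $R'$ is produced from $R$ by $S'$-redistribution.
   Context: An MDP is a tuple $(\mathcal{S},\mathcal{A},\tau,\mu_0,R,\gamma)$ with finite state set $\mathcal{S}$, finite action set $\mathcal{A}$, transition dynamics $\tau:\mathcal{S}\times\mathcal{A}\to\Delta(\mathcal{S})$, initial state distribution $\mu_0\in\Delta(\mathcal{S})$, deterministic reward function $R:\mathcal{S}\times\mathcal{A}\times\mathcal{S}\to\mathbb{R}$, and discount $\gamma\in(0,1)$. A policy is a map $\pi:\mathcal{S}\to\Delta(\mathcal{A})$. The return of a trajectory $(s_0,a_0,s_1,a_1,\dots)$ is $\sum_{t\ge 0}\gamma^t R(s_t,a_t,s_{t+1})$. The value function is $V^\pi(s)=\mathbb{E}[\text{return}]$ of the trajectory started at $s$ with actions drawn from $\pi$ and next states from $\tau$; the $Q$-function $Q^\pi(s,a)$ is the same expectation conditioned on the first action being $a$; equivalently $Q^\pi$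 is the unique solution of $Q^\pi(s,a)=\mathbb{E}_{S'\sim\tau(s,a)}[R(s,a,S')+\gamma V^\pi(S')]$, $V^\pi(s)=\mathbb{E}_{A\sim\pi(s)}[Q^\pi(s,A)]$. The policy evaluation function is $\mathcal{J}(\pi)=\mathbb{E}_{S_0\sim\mu_0}[V^\pi(S_0)]$; an optimal policy maximises $\mathcal{J}$, and $Q^\star$ denotes the (unique) $Q$-function of an optimal policy. Given $\tau$, $R'$ is produced from $R$ by $S'$-redistribution if $\mathbb{E}_{S'\sim\tau(s,a)}[R(s,a,S')]=\mathbb{E}_{S'\sim\tau(s,a)}[R'(s,a,S')]$ for all $s\in\mathcal{S}$, $a\in\mathcal{A}$. *)

theory Defs
  imports "HOL-Probability.Probability"
begin

definition bellman_eval ::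
  "('s \<Rightarrow> 'a \<Rightarrow> 's pmf) \<Rightarrow> ('s \<Rightarrow> 'a \<Rightarrow> 's \<Rightarrow> real) \<Rightarrow> real \<Rightarrow> ('s \<Rightarrow> 'a pmf)
    \<Rightarrow> ('s \<Rightarrow> 'a \<Rightarrow> real) \<Rightarrow> bool" where
  "bellman_eval tau R \<gamma> \<pi> Q \<longleftrightarrow>
     (\<forall>s a. Q s a = measure_pmf.expectation (tau s a)
        (\<lambda>s'. R s a s' + \<gamma> * measure_pmf.expectation (\<pi> s') (\<lambda>a'. Q s' a')))"

definition Qpi ::
  "('s \<Rightarrow> 'a \<Rightarrow> 's pmf) \<Rightarrow> ('s \<Rightarrow> 'a \<Rightarrow> 's \<Rightarrow> real) \<Rightarrow> real \<Rightarrow> ('s \<Rightarrow> 'a pmf)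
    \<Rightarrow> 's \<Rightarrow> 'a \<Rightarrow> real" where
  "Qpi tau R \<gamma> \<pi> = (THE Q. bellman_eval tau R \<gamma> \<pi> Q)"

definition bellman_opt ::
  "('s \<Rightarrow> 'a::finite \<Rightarrow> 's pmf) \<Rightarrow> ('s \<Rightarrow> 'a \<Rightarrow> 's \<Rightarrow> real) \<Rightarrow> real
    \<Rightarrow> ('s \<Rightarrow> 'a \<Rightarrow> real) \<Rightarrow> bool" where
  "bellman_opt tau R \<gamma> Q \<longleftrightarrow>
     (\<forall>s a. Q s a = measure_pmf.expectation (tau s a)
        (\<lambda>s'. R s a s' + \<gamma> * Max (range (Q s'))))"

text \<open>Q*: the unique solution of the Bellman optimality equation
  (the Q-function of an optimal policy).\<close>
definition Qstar ::
  "('s \<Rightarrow> 'a::finite \<Rightarrow> 's pmf) \<Rightarrow> ('s \<Rightarrow> 'a \<Rightarrow> 's \<Rightarrow> real) \<Rightarrow> real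
    \<Rightarrow> 's \<Rightarrow> 'a \<Rightarrow> real" where
  "Qstar tau R \<gamma> = (THE Q. bellman_opt tau R \<gamma> Q)"

definition S'_redistribution ::
  "('s \<Rightarrow> 'a \<Rightarrow> 's pmf) \<Rightarrow> ('s \<Rightarrow> 'a \<Rightarrow> 's \<Rightarrow> real) \<Rightarrow> ('s \<Rightarrow> 'a \<Rightarrow> 's \<Rightarrow> real) \<Rightarrow> bool" where
  "S'_redistribution tau R R' \<longleftrightarrow>
     (\<forall>s a. measure_pmf.expectation (tau s a) (\<lambda>s'. R s a s')
          = measure_pmf.expectation (tau s a) (\<lambda>s'. R' s a s'))"

end

theory Submission
  imports Defs
begin

text \<open>Both Bellman equations are fixed-point equations
  \<open>Q s a = r s a + \<gamma> * E[V Q s']\<close> with \<open>s' \<sim> tau s a\<close>, where \<open>r s a\<close> is the expected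
  immediate reward and \<open>V Q s'\<close> is the \<open>\<pi>\<close>-average, resp. the maximum, of \<open>Q s'\<close>. As \<open>V\<close> is
  non-expansive in the sup-norm, the right-hand side is a \<open>\<gamma>\<close>-contraction, so the fixed point
  is unique and depends on \<open>R\<close> only through \<open>r\<close>. Conversely, a common fixed point \<open>Q\<close> of
  the equations for two rewards forces \<open>r = Q - \<gamma> * E[V Q]\<close> to agree, and equal expected
  rewards is exactly \<open>S'\<close>-redistribution.\<close>

lemma sup_contraction_has_unique_fixpoint:
  fixes T :: "('i::finite \<Rightarrow> real) \<Rightarrow> 'i \<Rightarrow> real"
  assumes "c < 1"
    and contraction: "\<And>f g M x. (\<And>y. \<bar>f y - g y\<bar> \<le> M) \<Longrightarrow> \<bar>T f x - T g x\<bar> \<le> c * M"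
  shows "\<exists>!f. T f = f"
proof -
  have fspace: "Met_TC.fspace (UNIV::'i set) = (UNIV :: ('i \<Rightarrow> real) set)"
    by (auto simp: Met_TC.fspace_def finite_imp_bounded)
  have fdist: "Met_TC.fdist (UNIV::'i set) f g = Max (range (\<lambda>y. \<bar>f y - g y\<bar>))"
    for f g :: "'i \<Rightarrow> real"
    by (simp add: Met_TC.fdist_def fspace cSup_eq_Max dist_real_def)
  have metric: "Metric_space (Met_TC.fspace (UNIV::'i set))
      (Met_TC.fdist (UNIV::'i set) :: ('i \<Rightarrow> real) \<Rightarrow> _)"
    by (rule Met_TC.Metric_space_funspace)
  interpret F: Metric_space "UNIV :: ('i \<Rightarrow> real) set" "Met_TC.fdist (UNIV::'i set)"
    using metric fspace by simp
  have "mcomplete_of (funspace (UNIV::'i set) (Met_TC.Self :: real metric))"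
    by (rule Met_TC.mcomplete_funspace) (simp add: complete_UNIV)
  then have complete: F.mcomplete
    by (simp add: mcomplete_of_def funspace_def Met_TC.Self_def fspace metric[simplified fspace]
        Metric_space.mspace_metric Metric_space.mdist_metric)
  obtain f where "T f = f"
    using F.Banach_fixedpoint_thm[OF complete, of T c] assms
    by (auto simp: fdist Max_le_iff)
  moreover have "g = f" if "T g = g" "T f = f" for f g
  proof -
    let ?m = "Max (range (\<lambda>y. \<bar>f y - g y\<bar>))"
    have "\<bar>f x - g x\<bar> \<le> c * ?m" for x
      using contraction[of f g ?m x] that by simp
    then have "?m \<le> c * ?m" by (simp add: Max_le_iff)
    moreover have "0 \<le> ?m" by (simp add: Max_ge_iff)
    ultimately have "?m \<le> 0"
      using \<open>c < 1\<close> by (smt (verit) mult_le_cancel_right1)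
    then show ?thesis by (auto simp: Max_le_iff)
  qed
  ultimately show ?thesis by blast
qed

lemma sup_contraction_has_unique_fixpoint_curried:
  fixes T :: "('s::finite \<Rightarrow> 'a::finite \<Rightarrow> real) \<Rightarrow> 's \<Rightarrow> 'a \<Rightarrow> real"
  assumes "c < 1"
    and contraction: "\<And>f g M s a. (\<And>s a. \<bar>f s a - g s a\<bar> \<le> M) \<Longrightarrow> \<bar>T f s a - T g s a\<bar> \<le> c * M"
  shows "\<exists>!f. T f = f"
proof -
  define T' where "T' q = case_prod (T (curry q))" for q :: "'s \<times> 'a \<Rightarrow> real"
  have "\<exists>!q. T' q = q"
  proof (rule sup_contraction_has_unique_fixpoint[OF \<open>c < 1\<close>])
    fix f g :: "'s \<times> 'a \<Rightarrow> real" and M and x :: "'s \<times> 'a"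
    assume "\<And>y. \<bar>f y - g y\<bar> \<le> M"
    then show "\<bar>T' f x - T' g x\<bar> \<le> c * M"
      unfolding T'_def using contraction[of "curry f" "curry g" M] by (cases x) simp
  qed
  then obtain q where "T' q = q" and unique: "\<And>q'. T' q' = q' \<Longrightarrow> q' = q"
    by blast
  show ?thesis
  proof (rule ex1I)
    show "T (curry q) = curry q"
      using arg_cong[OF \<open>T' q = q\<close>, of curry] by (simp add: T'_def)
  next
    fix f assume "T f = f"
    then have "T' (case_prod f) = case_prod f" by (simp add: T'_def)
    then have "case_prod f = q" by (rule unique)
    then show "f = curry q" by auto
  qed
qed

lemma abs_expectation_le:
  fixes p :: "'x pmf" and f :: "'x \<Rightarrow> real"
  assumes "\<And>x. \<bar>f x\<bar> \<le> M"
  shows "\<bar>measure_pmf.expectation p f\<bar> \<le> M"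
proof -
  have "\<bar>measure_pmf.expectation p f\<bar> \<le> measure_pmf.expectation p (\<lambda>x. \<bar>f x\<bar>)"
    using integral_norm_bound[of "measure_pmf p" f] by simp
  also have "\<dots> \<le> measure_pmf.expectation p (\<lambda>_. M)"
  proof (rule integral_mono)
    show "integrable (measure_pmf p) (\<lambda>x. \<bar>f x\<bar>)"
      using assms by (intro measure_pmf.integrable_const_bound[where B = M]) auto
  qed (use assms in auto)
  also have "\<dots> = M"
    by simp
  finally show ?thesis .
qed

lemma abs_Max_range_diff_le:
  fixes f g :: "'a::finite \<Rightarrow> real"
  assumes "\<And>a. \<bar>f a - g a\<bar> \<le> M"
  shows "\<bar>Max (range f) - Max (range g)\<bar> \<le> M"
proof -
  have "Max (range f) \<in> range f" "Max (range g) \<in> range g"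
    by (intro Max_in; simp)+
  then obtain a b where "Max (range f) = f a" "Max (range g) = g b"
    by blast
  moreover have "g a \<le> Max (range g)" "f b \<le> Max (range f)" by auto
  ultimately show ?thesis using assms[of a] assms[of b] by linarith
qed

lemma expectation_add_scaled:
  fixes p :: "'x::finite pmf" and f g :: "'x \<Rightarrow> real"
  shows "measure_pmf.expectation p (\<lambda>x. f x + c * g x)
    = measure_pmf.expectation p f + c * measure_pmf.expectation p g"
  by (simp add: integrable_measure_pmf_finite)

definition expected_reward ::
  "('s \<Rightarrow> 'a \<Rightarrow> 's pmf) \<Rightarrow> ('s \<Rightarrow> 'a \<Rightarrow> 's \<Rightarrow> real) \<Rightarrow> 's \<Rightarrow> 'a \<Rightarrow> real" where
  "expected_reward tau R s a = measure_pmf.expectation (tau s a) (R s a)"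

lemma S'_redistribution_iff_expected_reward_eq:
  "S'_redistribution tau R R' \<longleftrightarrow> expected_reward tau R = expected_reward tau R'"
  by (simp add: S'_redistribution_def expected_reward_def fun_eq_iff)

definition bellman_backup ::
  "('s \<Rightarrow> 'a \<Rightarrow> 's pmf) \<Rightarrow> ('s \<Rightarrow> 'a \<Rightarrow> real) \<Rightarrow> real \<Rightarrow> (('s \<Rightarrow> 'a \<Rightarrow> real) \<Rightarrow> 's \<Rightarrow> real)
    \<Rightarrow> ('s \<Rightarrow> 'a \<Rightarrow> real) \<Rightarrow> 's \<Rightarrow> 'a \<Rightarrow> real" where
  "bellman_backup tau r \<gamma> V Q s a = r s a + \<gamma> * measure_pmf.expectation (tau s a) (V Q)"

definition sup_nonexpansive :: "(('s \<Rightarrow> 'a \<Rightarrow> real) \<Rightarrow> 's \<Rightarrow> real) \<Rightarrow> bool" where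
  "sup_nonexpansive V \<longleftrightarrow>
     (\<forall>Q Q' M s. (\<forall>s a. \<bar>Q s a - Q' s a\<bar> \<le> M) \<longrightarrow> \<bar>V Q s - V Q' s\<bar> \<le> M)"

lemma sup_nonexpansive_policy_average:
  fixes \<pi> :: "'s \<Rightarrow> 'a::finite pmf"
  shows "sup_nonexpansive (\<lambda>Q s. measure_pmf.expectation (\<pi> s) (Q s))"
  unfolding sup_nonexpansive_def
proof (intro allI impI)
  fix Q Q' :: "'s \<Rightarrow> 'a \<Rightarrow> real" and M s
  assume "\<forall>s a. \<bar>Q s a - Q' s a\<bar> \<le> M"
  then have "\<bar>measure_pmf.expectation (\<pi> s) (\<lambda>a. Q s a - Q' s a)\<bar> \<le> M"
    by (intro abs_expectation_le) auto
  then show "\<bar>measure_pmf.expectation (\<pi> s) (Q s) - measure_pmf.expectation (\<pi> s) (Q' s)\<bar> \<le> M"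
    by (simp add: integrable_measure_pmf_finite)
qed

lemma sup_nonexpansive_Max: "sup_nonexpansive (\<lambda>Q s. Max (range (Q s :: 'a::finite \<Rightarrow> real)))"
  by (simp add: sup_nonexpansive_def abs_Max_range_diff_le)

lemma bellman_backup_has_unique_fixpoint:
  fixes tau :: "'s::finite \<Rightarrow> 'a::finite \<Rightarrow> 's pmf"
  assumes "0 \<le> \<gamma>" "\<gamma> < 1" "sup_nonexpansive V"
  shows "\<exists>!Q. bellman_backup tau r \<gamma> V Q = Q"
proof (rule sup_contraction_has_unique_fixpoint_curried[OF \<open>\<gamma> < 1\<close>])
  fix Q Q' :: "'s \<Rightarrow> 'a \<Rightarrow> real" and M s a
  assume "\<And>s a. \<bar>Q s a - Q' s a\<bar> \<le> M"
  then have "\<bar>measure_pmf.expectation (tau s a) (\<lambda>s'. V Q s' - V Q' s')\<bar> \<le> M"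
    using \<open>sup_nonexpansive V\<close> by (intro abs_expectation_le) (auto simp: sup_nonexpansive_def)
  then show "\<bar>bellman_backup tau r \<gamma> V Q s a - bellman_backup tau r \<gamma> V Q' s a\<bar> \<le> \<gamma> * M"
    using \<open>0 \<le> \<gamma>\<close>
    by (simp add: bellman_backup_def integrable_measure_pmf_finite abs_mult mult_left_mono
        flip: right_diff_distrib)
qed

lemma bellman_backup_fixpoint_eq_iff:
  fixes tau :: "'s::finite \<Rightarrow> 'a::finite \<Rightarrow> 's pmf"
  assumes "0 \<le> \<gamma>" "\<gamma> < 1" "sup_nonexpansive V"
  shows "(THE Q. bellman_backup tau r \<gamma> V Q = Q) = (THE Q. bellman_backup tau r' \<gamma> V Q = Q)
    \<longleftrightarrow> r = r'"
proof
  let ?Q = "THE Q. bellman_backup tau r \<gamma> V Q = Q"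
  assume same_fixpoint: "?Q = (THE Q. bellman_backup tau r' \<gamma> V Q = Q)"
  have "bellman_backup tau r \<gamma> V ?Q = ?Q"
    by (rule theI'[OF bellman_backup_has_unique_fixpoint[OF assms]])
  moreover have "bellman_backup tau r' \<gamma> V ?Q = ?Q"
    unfolding same_fixpoint by (rule theI'[OF bellman_backup_has_unique_fixpoint[OF assms]])
  ultimately have "bellman_backup tau r \<gamma> V ?Q = bellman_backup tau r' \<gamma> V ?Q"
    by simp
  then show "r = r'"
    by (simp add: fun_eq_iff bellman_backup_def)
qed simp

lemma bellman_eval_iff_fixpoint:
  fixes tau :: "'s::finite \<Rightarrow> 'a \<Rightarrow> 's pmf"
  shows "bellman_eval tau R \<gamma> \<pi> Q \<longleftrightarrow>
    bellman_backup tau (expected_reward tau R) \<gamma> (\<lambda>Q s. measure_pmf.expectation (\<pi> s) (Q s)) Q = Q"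
  unfolding bellman_eval_def bellman_backup_def expected_reward_def fun_eq_iff
  by (simp add: expectation_add_scaled eq_commute[of "Q _ _"])

lemma bellman_opt_iff_fixpoint:
  fixes tau :: "'s::finite \<Rightarrow> 'a::finite \<Rightarrow> 's pmf"
  shows "bellman_opt tau R \<gamma> Q \<longleftrightarrow>
    bellman_backup tau (expected_reward tau R) \<gamma> (\<lambda>Q s. Max (range (Q s))) Q = Q"
  unfolding bellman_opt_def bellman_backup_def expected_reward_def fun_eq_iff
  by (simp add: expectation_add_scaled eq_commute[of "Q _ _"])

theorem theorem3p1:
  fixes tau :: "'s::finite \<Rightarrow> 'a::finite \<Rightarrow> 's pmf"
    and \<pi> :: "'s \<Rightarrow> 'a pmf"
    and R R' :: "'s \<Rightarrow> 'a \<Rightarrow> 's \<Rightarrow> real"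
    and \<gamma> :: real
  assumes "0 < \<gamma>" and "\<gamma> < 1"
  shows "(Qpi tau R \<gamma> \<pi> = Qpi tau R' \<gamma> \<pi> \<longleftrightarrow> S'_redistribution tau R R')
       \<and> (Qstar tau R \<gamma> = Qstar tau R' \<gamma> \<longleftrightarrow> S'_redistribution tau R R')"
proof -
  have "0 \<le> \<gamma>" using \<open>0 < \<gamma>\<close> by simp
  note fixpoint_eq_iff = bellman_backup_fixpoint_eq_iff[OF \<open>0 \<le> \<gamma>\<close> \<open>\<gamma> < 1\<close>, where tau = tau
      and r = "expected_reward tau R" and r' = "expected_reward tau R'"]
  show ?thesis
    unfolding Qpi_def Qstar_def bellman_eval_iff_fixpoint bellman_opt_iff_fixpoint
      S'_redistribution_iff_expected_reward_eq
      fixpoint_eq_iff[OF sup_nonexpansive_policy_average] fixpoint_eq_iff[OF sup_nonexpansive_Max]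
    by (rule conjI refl)+
qed

end
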